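(* Let $g_{00},g_{11},g_{22},g_{33}$ solve system (SL) with positive initial data, and define $Ric_{11} = \frac{g_{11}^2-(g_{22}-g_{33})^2}{2g_{22}g_{33}}$, $Ric_{22} = \frac{g_{22}^2-(g_{11}+g_{33})^2}{2g_{11}g_{33}}$, $Ric_{33} = \frac{g_{33}^2-(g_{11}+g_{22})^2}{2g_{11}g_{22}}$, $S = -\frac{g_{11}^2+g_{22}^2+g_{33}^2+2(g_{11}g_{22}+g_{11}g_{33}-g_{22}g_{33})}{2g_{11}g_{22}g_{33}}$. Then as $t\to\infty$: $Ric_{11}/g_{11}\to 0$, $Ric_{22}\to -1$, $Ric_{33}\to-1$, and $S\to 0$.
   Context: Let $\det h = h_{00}h_{11}h_{22}h_{33}$, $\beta = \frac{1}{6(\det h)^2}$, and $p(x,y,z) = x^4 - x^3(y+z) + x^2yz + x(-y^3+y^2z+yz^2-z^3) + y^4 - y^3z - yz^3 + z^4$, $q(x,y,z) = 5x^4 - 3x^3(y+z) + x^2yz + x(y^3-y^2z-yz^2+z^3) - 3y^4 + 3y^3z + 3yz^3 - 3z^4$. System (SL): $\dot g_{00} = -\beta\,p(-g_{11},g_{22},g_{33})\,g_{00}^3$, $\dot g_{11} = -\beta\,q(-g_{11},g_{22},g_{33})\,g_{00}^2g_{11}$, $\dot g_{22} = -\beta\,q(g_{22},-g_{11},g_{33})\,g_{00}^2g_{22}$, $\dot g_{33} = -\beta\,q(g_{33},-g_{11},g_{22})\,g_{00}^2g_{33}$, with $g_{ii}(0)=h_{ii}>0$. This is Bach flow on $\mathbb{R}\times\widetilde{SL}(2,\mathbb{R})$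 in a diagonalizing left-invariant frame with structure matrix $E=\mathrm{diag}(-1,1,1)$; the displayed $Ric_{ii}$ and $S$ are the Ricci components and scalar curvature of the three-dimensional factor metric $\mathrm{diag}(g_{11},g_{22},g_{33})$ in that frame. *)

theory Defs
  imports "HOL-Analysis.Analysis"
begin

definition pSL :: "real \<Rightarrow> real \<Rightarrow> real \<Rightarrow> real" where
  "pSL x y z = x^4 - x^3*(y+z) + x^2*y*z + x*(- (y^3) + y^2*z + y*z^2 - z^3)
      + y^4 - y^3*z - y*z^3 + z^4"

definition qSL :: "real \<Rightarrow> real \<Rightarrow> real \<Rightarrow> real" where
  "qSL x y z = 5*x^4 - 3*x^3*(y+z) + x^2*y*z + x*(y^3 - y^2*z - y*z^2 + z^3)
      - 3*y^4 + 3*y^3*z + 3*y*z^3 - 3*z^4"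

definition betaSL :: "real \<Rightarrow> real \<Rightarrow> real \<Rightarrow> real \<Rightarrow> real" where
  "betaSL h00 h11 h22 h33 = 1 / (6 * (h00*h11*h22*h33)^2)"

definition solves_SL ::
  "(real \<Rightarrow> real) \<Rightarrow> (real \<Rightarrow> real) \<Rightarrow> (real \<Rightarrow> real) \<Rightarrow> (real \<Rightarrow> real)
   \<Rightarrow> real \<Rightarrow> real \<Rightarrow> real \<Rightarrow> real \<Rightarrow> bool" where
  "solves_SL g00 g11 g22 g33 h00 h11 h22 h33 \<longleftrightarrow>
     g00 0 = h00 \<and> g11 0 = h11 \<and> g22 0 = h22 \<and> g33 0 = h33 \<and>
     (\<forall>t\<ge>0.
       (g00 has_real_derivative
          (- betaSL h00 h11 h22 h33 * pSL (- g11 t) (g22 t) (g33 t) * (g00 t)^3))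
          (at t within {0..}) \<and>
       (g11 has_real_derivative
          (- betaSL h00 h11 h22 h33 * qSL (- g11 t) (g22 t) (g33 t) * (g00 t)^2 * g11 t))
          (at t within {0..}) \<and>
       (g22 has_real_derivative
          (- betaSL h00 h11 h22 h33 * qSL (g22 t) (- g11 t) (g33 t) * (g00 t)^2 * g22 t))
          (at t within {0..}) \<and>
       (g33 has_real_derivative
          (- betaSL h00 h11 h22 h33 * qSL (g33 t) (- g11 t) (g22 t) * (g00 t)^2 * g33 t))
          (at t within {0..}))"

definition Ric11 :: "real \<Rightarrow> real \<Rightarrow> real \<Rightarrow> real" where
  "Ric11 a b c = (a^2 - (b - c)^2) / (2*b*c)"
definition Ric22 :: "real \<Rightarrow> real \<Rightarrow> real \<Rightarrow> real" where
  "Ric22 a b c = (b^2 - (a + c)^2) / (2*a*c)"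
definition Ric33 :: "real \<Rightarrow> real \<Rightarrow> real \<Rightarrow> real" where
  "Ric33 a b c = (c^2 - (a + b)^2) / (2*a*b)"
definition scalS :: "real \<Rightarrow> real \<Rightarrow> real \<Rightarrow> real" where
  "scalS a b c = - (a^2 + b^2 + c^2 + 2*(a*b + a*c - b*c)) / (2*a*b*c)"

end

(* Along a solution the determinant g00 g11 g22 g33 is conserved, so beta g00^2 = 1/(6 (g11 g22 g33)^2)
   and x = g11, y = g22, z = g33 solve a closed autonomous system.  Its vector field makes
   x (y + z) nonincreasing, so x (y + z) <= P0 for all times.  This bound turns the evolution of
   R = ((y - z)/(y + z))^2 into the Gronwall inequality R' <= -(32/(3 P0)) R, so y and z become
   balanced.  Then x/(y + z) decreases at the fixed rate 4/(3 P0) as long as it is at least 1/2,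
   so eventually x <= (y + z)/2; in that regime U = ((y - z)/x)^2 decays exponentially, and once U
   is small (y + z)^2 grows at least linearly.  With y + z -> oo, x (y + z) <= P0 and U -> 0, the
   explicit formulas bound |Ric11/x|, |Ric22 + 1| and |S| by quantities tending to 0; Ric33 is
   Ric22 with y and z exchanged, and the reduced system is symmetric under that exchange. *)

theory Submission
  imports Defs "HOL-Real_Asymp.Real_Asymp"
begin

section \<open>Comparison principles on \<open>[0, \<infinity>)\<close>\<close>

lemma continuous_on_if_has_derivative_nonneg:
  assumes "\<And>t. t \<ge> 0 \<Longrightarrow> (f has_real_derivative f' t) (at t within {0..})"
  shows "continuous_on {0..} f"
  using assms DERIV_continuous continuous_on_eq_continuous_within by fastforce

lemma continuous_pos_if_nonzero:
  fixes f :: "real \<Rightarrow> real"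
  assumes "continuous_on {0..} f" "f 0 > 0" "\<And>t. t \<ge> 0 \<Longrightarrow> f t \<noteq> 0" "t \<ge> 0"
  shows "f t > 0"
proof (rule ccontr)
  assume "\<not> f t > 0"
  moreover have "continuous_on {0..t} f" using assms(1) by (rule continuous_on_subset) auto
  ultimately obtain s where "0 \<le> s" "s \<le> t" "f s = 0" using IVT2'[of f t 0 0] assms by auto
  then show False using assms(3) by auto
qed

lemma nonincreasing_if_derivative_nonpos:
  assumes deriv: "\<And>t. t \<ge> 0 \<Longrightarrow> (f has_real_derivative f' t) (at t within {0..})"
    and "0 \<le> a" "a \<le> b" and nonpos: "\<And>t. a < t \<Longrightarrow> t < b \<Longrightarrow> f' t \<le> 0"
  shows "f b \<le> f a"
proof (rule DERIV_nonpos_imp_decreasing_open[OF \<open>a \<le> b\<close>])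
  fix t assume t: "a < t" "t < b"
  then have "t \<in> interior {0::real..}" using \<open>0 \<le> a\<close> by simp
  then have "(f has_real_derivative f' t) (at t)"
    using deriv[of t] t \<open>0 \<le> a\<close> at_within_interior by fastforce
  then show "\<exists>y. (f has_real_derivative y) (at t) \<and> y \<le> 0" using nonpos t by blast
next
  show "continuous_on {a..b} f"
    using continuous_on_subset[OF continuous_on_if_has_derivative_nonneg[OF deriv]] \<open>0 \<le> a\<close>
    by auto
qed

lemma le_linear_if_derivative_le:
  assumes deriv: "\<And>t. t \<ge> 0 \<Longrightarrow> (f has_real_derivative f' t) (at t within {0..})"
    and "0 \<le> a" "a \<le> b" and le: "\<And>t. a < t \<Longrightarrow> t < b \<Longrightarrow> f' t \<le> c"
  shows "f b \<le> f a + c * (b - a)"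
proof -
  have "f b - c * b \<le> f a - c * a"
    by (rule nonincreasing_if_derivative_nonpos[where f' = "\<lambda>t. f' t - c"])
       (use le assms(2,3) in \<open>auto intro!: derivative_eq_intros deriv\<close>)
  then show ?thesis by (simp add: algebra_simps)
qed

lemma le_exp_decay_if_derivative_le:
  assumes deriv: "\<And>t. t \<ge> 0 \<Longrightarrow> (f has_real_derivative f' t) (at t within {0..})"
    and "0 \<le> a" "a \<le> b" and le: "\<And>t. a < t \<Longrightarrow> t < b \<Longrightarrow> f' t \<le> - k * f t"
  shows "f b \<le> f a * exp (- k * (b - a))"
proof -
  have "f b * exp (k * b) \<le> f a * exp (k * a)"
  proof (rule nonincreasing_if_derivative_nonpos
      [where f = "\<lambda>t. f t * exp (k * t)" and f' = "\<lambda>t. (f' t + k * f t) * exp (k * t)"])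
    show "((\<lambda>t. f t * exp (k * t)) has_real_derivative (f' t + k * f t) * exp (k * t))
        (at t within {0..})" if "t \<ge> 0" for t
      using deriv[OF that] by (auto intro!: derivative_eq_intros simp: algebra_simps)
    show "(f' t + k * f t) * exp (k * t) \<le> 0" if "a < t" "t < b" for t
      using le[OF that] by (simp add: mult_nonpos_nonneg)
  qed (use assms(2,3) in auto)
  then have "f b \<le> f a * exp (k * a) / exp (k * b)" by (simp add: pos_le_divide_eq)
  also have "\<dots> = f a * exp (- k * (b - a))"
    by (simp add: exp_diff algebra_simps)
  finally show ?thesis .
qed

lemma le_if_derivative_nonpos_above:
  assumes deriv: "\<And>t. t \<ge> 0 \<Longrightarrow> (f has_real_derivative f' t) (at t within {0..})"
    and "0 \<le> s" "s \<le> t" "f s \<le> K"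
    and nonpos: "\<And>u. s < u \<Longrightarrow> u < t \<Longrightarrow> K < f u \<Longrightarrow> f' u \<le> 0"
  shows "f t \<le> K"
proof (rule ccontr)
  assume "\<not> f t \<le> K"
  define S where "S = {s..t} \<inter> f -` {..K}"
  have "closed S"
    unfolding S_def
    by (rule continuous_closed_preimage)
       (use continuous_on_subset[OF continuous_on_if_has_derivative_nonneg[OF deriv]]
         \<open>0 \<le> s\<close> in auto)
  moreover have "s \<in> S" "bdd_above S" using assms(3,4) unfolding S_def by auto
  ultimately have "Sup S \<in> S" using closed_contains_Sup by blast
  then have last: "s \<le> Sup S" "Sup S \<le> t" "f (Sup S) \<le> K" unfolding S_def by auto
  have above: "K < f u" if "Sup S < u" "u \<le> t" for u
    using cSup_upper[OF _ \<open>bdd_above S\<close>, of u] that last unfolding S_def by force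
  have "f t \<le> f (Sup S)"
    by (rule nonincreasing_if_derivative_nonpos[OF deriv])
       (use last above nonpos \<open>0 \<le> s\<close> in auto)
  with last \<open>\<not> f t \<le> K\<close> show False by simp
qed

lemma eventually_le_if_derivative_le_neg_above:
  assumes deriv: "\<And>t. t \<ge> 0 \<Longrightarrow> (f has_real_derivative f' t) (at t within {0..})"
    and "c > 0" and "eventually (\<lambda>t. K \<le> f t \<longrightarrow> f' t \<le> - c) at_top"
  shows "eventually (\<lambda>t. f t \<le> K) at_top"
proof -
  obtain N where N: "N \<ge> 0" "\<And>t. t \<ge> N \<Longrightarrow> K \<le> f t \<Longrightarrow> f' t \<le> - c"
    using assms(3) unfolding eventually_at_top_linorder by (metis max.cobounded1 max.boundedE)
  define t2 where "t2 = N + \<bar>f N - K\<bar> / c"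
  have "N \<le> t2" unfolding t2_def using \<open>c > 0\<close> by simp
  have "\<exists>s. N \<le> s \<and> s \<le> t2 \<and> f s \<le> K"
  proof (rule ccontr)
    assume "\<nexists>s. N \<le> s \<and> s \<le> t2 \<and> f s \<le> K"
    then have above: "K < f u" if "N \<le> u" "u \<le> t2" for u using that by force
    have "f t2 \<le> f N + (- c) * (t2 - N)"
    proof (rule le_linear_if_derivative_le[OF deriv N(1) \<open>N \<le> t2\<close>])
      show "f' u \<le> - c" if "N < u" "u < t2" for u
        using N(2)[of u] above[of u] that by simp
    qed
    also have "\<dots> \<le> K" unfolding t2_def using \<open>c > 0\<close> by simp
    finally show False using above[OF \<open>N \<le> t2\<close>] by simp
  qed
  then obtain s where s: "N \<le> s" "s \<le> t2" "f s \<le> K" by blast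
  have "f t \<le> K" if "t \<ge> t2" for t
  proof (rule le_if_derivative_nonpos_above[OF deriv _ _ \<open>f s \<le> K\<close>])
    show "f' u \<le> 0" if "s < u" "K < f u" for u
      using N(2)[of u] that s \<open>c > 0\<close> by simp
  qed (use s N that in auto)
  then show ?thesis unfolding eventually_at_top_linorder by blast
qed

lemma tendsto_0_if_derivative_le_neg_mult:
  assumes deriv: "\<And>t. t \<ge> 0 \<Longrightarrow> (f has_real_derivative f' t) (at t within {0..})"
    and "k > 0" and nonneg: "\<And>t. t \<ge> 0 \<Longrightarrow> f t \<ge> 0"
    and "eventually (\<lambda>t. f' t \<le> - k * f t) at_top"
  shows "(f \<longlongrightarrow> 0) at_top"
proof -
  obtain N where N: "N \<ge> 0" "\<And>t. t \<ge> N \<Longrightarrow> f' t \<le> - k * f t"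
    using assms(4) unfolding eventually_at_top_linorder by (metis max.cobounded1 max.boundedE)
  have "((\<lambda>t. f N * exp (- k * (t - N))) \<longlongrightarrow> 0) at_top"
    using \<open>k > 0\<close> by real_asymp
  moreover have "eventually (\<lambda>t. norm (f t) \<le> f N * exp (- k * (t - N))) at_top"
    unfolding eventually_at_top_linorder
    using le_exp_decay_if_derivative_le[OF deriv] N nonneg by (auto intro!: exI[of _ N])
  ultimately show ?thesis by (rule Lim_null_comparison[rotated])
qed

lemma filterlim_at_top_if_derivative_ge:
  assumes deriv: "\<And>t. t \<ge> 0 \<Longrightarrow> (f has_real_derivative f' t) (at t within {0..})"
    and "c > 0" and "eventually (\<lambda>t. f' t \<ge> c) at_top"
  shows "filterlim f at_top at_top"
proof -
  obtain N where N: "N \<ge> 0" "\<And>t. t \<ge> N \<Longrightarrow> f' t \<ge> c"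
    using assms(3) unfolding eventually_at_top_linorder by (metis max.cobounded1 max.boundedE)
  have "- f t \<le> - f N + (- c) * (t - N)" if "t \<ge> N" for t
    by (rule le_linear_if_derivative_le[where f' = "\<lambda>t. - f' t"])
       (use that N deriv in \<open>auto intro: DERIV_minus\<close>)
  then have "eventually (\<lambda>t. f N + c * (t - N) \<le> f t) at_top"
    unfolding eventually_at_top_linorder by (auto simp: algebra_simps)
  moreover have "filterlim (\<lambda>t. f N + c * (t - N)) at_top at_top"
    using \<open>c > 0\<close> by real_asymp
  ultimately show ?thesis using filterlim_at_top_mono by blast
qed

section \<open>The reduced system\<close>

lemma pSL_plus_qSL_cyclic_eq_0:
  "pSL (-x) y z + qSL (-x) y z + qSL y (-x) z + qSL z (-x) y = 0"
  unfolding pSL_def qSL_def by algebra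

text \<open>Written in the mean \<open>m = (y + z)/2\<close> and the squared half-difference
  \<open>e = ((y - z)/2)\<^sup>2\<close> of \<open>g\<^sub>2\<^sub>2, g\<^sub>3\<^sub>3\<close>, the terms of the vector field have visible signs.\<close>

lemma qSL_first_mean_sqdiff:
  assumes "m = (y + z) / 2" "e = ((y - z) / 2)^2"
  shows "qSL (-x) y z = 5*x^4 + 6*x^3*m + x^2*m^2 - x^2*e - 8*x*m*e - 36*m^2*e - 12*e^2"
  unfolding assms qSL_def by (simp add: field_simps; algebra)

lemma qSL_pair_weighted_sum_mean_sqdiff:
  assumes "m = (y + z) / 2" "e = ((y - z) / 2)^2"
  shows "y * qSL y (-x) z + z * qSL z (-x) y =
    -6*x^4*m - 8*x^3*m^2 + 4*x^3*e - 2*x^2*m^3 + 2*x^2*m*e + 32*x*m^2*e + 16*x*e^2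
    + 72*m^3*e + 88*m*e^2"
  unfolding assms qSL_def by (simp add: field_simps; algebra)

lemma qSL_pair_weighted_diff_mean_sqdiff:
  assumes "m = (y + z) / 2" "e = ((y - z) / 2)^2"
  shows "y * qSL y (-x) z - z * qSL z (-x) y = (y - z) *
    (-3*x^4 - 2*x^3*m - x^2*m^2 + x^2*e + 16*x*m^3 + 8*x*m*e + 24*m^4 + 52*m^2*e + 4*e^2)"
  unfolding assms qSL_def by (simp add: field_simps; algebra)

lemma qSL_pair_diff:
  "qSL y (-x) z - qSL z (-x) y =
    (y - z) * (2*x^3 + x*(6*y^2 + 4*y*z + 6*z^2) + 8*y^3 + 4*y^2*z + 4*y*z^2 + 8*z^3)"
  unfolding qSL_def by (simp add: field_simps; algebra)

lemma four_mult_le_sum_squared: "4 * (y * z) \<le> ((y::real) + z)^2"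
  using zero_le_power2[of "y - z"] by (simp add: power2_eq_square algebra_simps)

text \<open>Since \<open>g\<^sub>0\<^sub>0 g\<^sub>1\<^sub>1 g\<^sub>2\<^sub>2 g\<^sub>3\<^sub>3\<close> is conserved,
  \<open>\<beta> g\<^sub>0\<^sub>0\<^sup>2 = rateSL g\<^sub>1\<^sub>1 g\<^sub>2\<^sub>2 g\<^sub>3\<^sub>3\<close> along a solution,
  so the last three equations of (SL) form a closed system.\<close>

definition rateSL :: "real \<Rightarrow> real \<Rightarrow> real \<Rightarrow> real" where
  "rateSL x y z = 1 / (6 * (x*y*z)^2)"

definition reduced_dx :: "real \<Rightarrow> real \<Rightarrow> real \<Rightarrow> real" where
  "reduced_dx x y z = - rateSL x y z * qSL (-x) y z * x"

definition reduced_dy :: "real \<Rightarrow> real \<Rightarrow> real \<Rightarrow> real" where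
  "reduced_dy x y z = - rateSL x y z * qSL y (-x) z * y"

lemma rateSL_swap: "rateSL x z y = rateSL x y z"
  unfolding rateSL_def by (simp add: ac_simps)

lemma rateSL_pos: "x > 0 \<Longrightarrow> y > 0 \<Longrightarrow> z > 0 \<Longrightarrow> rateSL x y z > 0"
  unfolding rateSL_def by simp

lemma rateSL_ge_mean:
  assumes "x > 0" "y > 0" "z > 0"
  shows "1 / (6 * x^2 * ((y + z) / 2)^4) \<le> rateSL x y z"
proof -
  have "y * z \<le> ((y + z) / 2)^2"
    using four_mult_le_sum_squared[of y z] by (simp add: power_divide)
  then have "(y * z)^2 \<le> (((y + z) / 2)^2)^2"
    using assms by (intro power_mono) auto
  then have "(x*y*z)^2 \<le> x^2 * (((y + z) / 2)^2)^2"
    by (simp add: power_mult_distrib mult.assoc mult_left_mono)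
  then show ?thesis
    unfolding rateSL_def using assms by (intro frac_le) (auto simp: power_mult[symmetric])
qed

lemma reduced_dx_swap: "reduced_dx x z y = reduced_dx x y z"
  unfolding reduced_dx_def qSL_def by (simp add: rateSL_swap algebra_simps)

locale reduced_SL_flow =
  fixes x y z :: "real \<Rightarrow> real"
  assumes pos: "\<And>t. t \<ge> 0 \<Longrightarrow> x t > 0 \<and> y t > 0 \<and> z t > 0"
    and deriv_x: "\<And>t. t \<ge> 0 \<Longrightarrow>
      (x has_real_derivative reduced_dx (x t) (y t) (z t)) (at t within {0..})"
    and deriv_y: "\<And>t. t \<ge> 0 \<Longrightarrow>
      (y has_real_derivative reduced_dy (x t) (y t) (z t)) (at t within {0..})"
    and deriv_z: "\<And>t. t \<ge> 0 \<Longrightarrow>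
      (z has_real_derivative reduced_dy (x t) (z t) (y t)) (at t within {0..})"

lemma solves_SL_determinant_const:
  assumes sol: "solves_SL g00 g11 g22 g33 h00 h11 h22 h33" and "t \<ge> 0"
  shows "g00 t * g11 t * g22 t * g33 t = h00 * h11 * h22 * h33"
proof -
  define b where "b = betaSL h00 h11 h22 h33"
  have deriv0: "((\<lambda>t. g00 t * g11 t * g22 t * g33 t) has_real_derivative 0) (at t within {0..})"
    if "t \<ge> 0" for t
  proof -
    have "((\<lambda>t. g00 t * g11 t * g22 t * g33 t) has_real_derivative
        - b * (g00 t)^3 * g11 t * g22 t * g33 t * (pSL (- g11 t) (g22 t) (g33 t)
          + qSL (- g11 t) (g22 t) (g33 t) + qSL (g22 t) (- g11 t) (g33 t)
          + qSL (g33 t) (- g11 t) (g22 t))) (at t within {0..})"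
      using sol that unfolding solves_SL_def b_def[symmetric]
      by (auto intro!: derivative_eq_intros simp: algebra_simps power2_eq_square power3_eq_cube)
    then show ?thesis by (simp add: pSL_plus_qSL_cyclic_eq_0)
  qed
  then obtain c where "\<forall>t\<in>{0..}. g00 t * g11 t * g22 t * g33 t = c"
    using has_field_derivative_zero_constant[of "{0::real..}" "\<lambda>t. g00 t * g11 t * g22 t * g33 t"]
      deriv0 by auto
  then show ?thesis using sol \<open>t \<ge> 0\<close> unfolding solves_SL_def by force
qed

lemma solves_SL_reduced_SL_flow:
  assumes h: "h00 > 0" "h11 > 0" "h22 > 0" "h33 > 0"
    and sol: "solves_SL g00 g11 g22 g33 h00 h11 h22 h33"
  shows "reduced_SL_flow g11 g22 g33"
proof -
  define b where "b = betaSL h00 h11 h22 h33"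
  note S = sol[unfolded solves_SL_def b_def[symmetric]]
  have d11: "(g11 has_real_derivative - b * qSL (- g11 t) (g22 t) (g33 t) * (g00 t)^2 * g11 t)
      (at t within {0..})" if "t \<ge> 0" for t
    using S that by blast
  have d22: "(g22 has_real_derivative - b * qSL (g22 t) (- g11 t) (g33 t) * (g00 t)^2 * g22 t)
      (at t within {0..})" if "t \<ge> 0" for t
    using S that by blast
  have d33: "(g33 has_real_derivative - b * qSL (g33 t) (- g11 t) (g22 t) * (g00 t)^2 * g33 t)
      (at t within {0..})" if "t \<ge> 0" for t
    using S that by blast
  have "h00 * h11 * h22 * h33 \<noteq> 0" using h by simp
  then have nonzero: "g00 t \<noteq> 0 \<and> g11 t \<noteq> 0 \<and> g22 t \<noteq> 0 \<and> g33 t \<noteq> 0" if "t \<ge> 0" for t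
    using solves_SL_determinant_const[OF sol that] by (metis mult_eq_0_iff)
  have pos: "g11 t > 0 \<and> g22 t > 0 \<and> g33 t > 0" if "t \<ge> 0" for t
    using continuous_pos_if_nonzero[OF continuous_on_if_has_derivative_nonneg[OF d11]]
      continuous_pos_if_nonzero[OF continuous_on_if_has_derivative_nonneg[OF d22]]
      continuous_pos_if_nonzero[OF continuous_on_if_has_derivative_nonneg[OF d33]]
      S h nonzero that by simp
  have rate: "b * (g00 t)^2 = rateSL (g11 t) (g22 t) (g33 t)" if "t \<ge> 0" for t
  proof -
    have "b = 1 / (6 * (g00 t * g11 t * g22 t * g33 t)^2)"
      unfolding b_def betaSL_def solves_SL_determinant_const[OF sol that] ..
    then show ?thesis
      using nonzero[OF that] unfolding rateSL_def by (simp add: field_simps power2_eq_square)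
  qed
  show ?thesis
  proof
    fix t :: real assume t: "t \<ge> 0"
    show "g11 t > 0 \<and> g22 t > 0 \<and> g33 t > 0" using pos[OF t] .
    show "(g11 has_real_derivative reduced_dx (g11 t) (g22 t) (g33 t)) (at t within {0..})"
      using d11[OF t] unfolding reduced_dx_def rate[OF t, symmetric] by (simp add: ac_simps)
    show "(g22 has_real_derivative reduced_dy (g11 t) (g22 t) (g33 t)) (at t within {0..})"
      using d22[OF t] unfolding reduced_dy_def rate[OF t, symmetric] by (simp add: ac_simps)
    show "(g33 has_real_derivative reduced_dy (g11 t) (g33 t) (g22 t)) (at t within {0..})"
      using d33[OF t] unfolding reduced_dy_def rateSL_swap rate[OF t, symmetric] by (simp add: ac_simps)
  qed
qed

lemma first_mult_pair_sum_derivative_nonpos: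
  assumes "x > 0" "y > 0" "z > 0"
  shows "reduced_dx x y z * (y + z) + x * (reduced_dy x y z + reduced_dy x z y) \<le> 0"
proof -
  define m where "m = (y + z) / 2"
  define e where "e = ((y - z) / 2)^2"
  have m: "m > 0" "y + z = 2 * m" using assms unfolding m_def by auto
  have "(y + z) * qSL (-x) y z + (y * qSL y (-x) z + z * qSL z (-x) y) =
      4*x^4*m + 4*x^3*m^2 + 4*x^3*e + 16*x*m^2*e + 16*x*e^2 + 64*m*e^2"
    unfolding m(2) qSL_first_mean_sqdiff[OF m_def e_def]
      qSL_pair_weighted_sum_mean_sqdiff[OF m_def e_def] by algebra
  also have "\<dots> \<ge> 0" using m assms unfolding e_def by simp
  finally have "0 \<le> (y + z) * qSL (-x) y z + (y * qSL y (-x) z + z * qSL z (-x) y)" .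
  moreover have "reduced_dx x y z * (y + z) + x * (reduced_dy x y z + reduced_dy x z y) =
      - (rateSL x y z * x) * ((y + z) * qSL (-x) y z + (y * qSL y (-x) z + z * qSL z (-x) y))"
    unfolding reduced_dx_def reduced_dy_def by (simp add: rateSL_swap algebra_simps)
  ultimately show ?thesis
    using rateSL_pos[OF assms] assms
    by (metis mult_nonneg_nonneg neg_le_0_iff_le less_imp_le mult_minus_left)
qed

lemma pair_sqdiff_ratio_derivative_le:
  assumes pos: "x > 0" "y > 0" "z > 0" and P: "x * (y + z) \<le> P0"
  defines "dy \<equiv> reduced_dy x y z" and "dz \<equiv> reduced_dy x z y"
  shows "4 * (y - z) * (dy * z - dz * y) / (y + z)^3 \<le> - (32 / (3 * P0)) * ((y - z)^2 / (y + z)^2)"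
proof -
  define K where "K = 2*x^3 + x*(6*y^2 + 4*y*z + 6*z^2) + 8*y^3 + 4*y^2*z + 4*y*z^2 + 8*z^3"
  define T where "T = rateSL x y z"
  define M where "M = y + z"
  have M: "M > 0" "y * z \<le> M^2 / 4"
    using pos four_mult_le_sum_squared[of y z] unfolding M_def by auto
  have "dy * z - dz * y = - T * y * z * (qSL y (-x) z - qSL z (-x) y)"
    unfolding dy_def dz_def T_def reduced_dy_def by (simp add: rateSL_swap algebra_simps)
  then have cross: "dy * z - dz * y = - T * y * z * (y - z) * K"
    unfolding qSL_pair_diff K_def by simp
  have lhs: "4 * (y - z) * (dy * z - dz * y) / M^3
      = - (4 * T * y * z * K / M) * ((y - z)^2 / M^2)"
    unfolding cross using M by (simp add: field_simps eval_nat_numeral)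
  have "K - 4*x*M^2 = 2*x^3 + 2*x*(y - z)^2 + 8*y^3 + 4*y^2*z + 4*y*z^2 + 8*z^3"
    unfolding K_def M_def by (simp add: algebra_simps power2_eq_square)
  also have "\<dots> \<ge> 0" using pos by simp
  finally have K: "4*x*M^2 \<le> K" by simp
  have "32 / (3 * P0) \<le> 32 / (3 * (x * M))"
    using P pos M unfolding M_def by (simp add: frac_le)
  also have "\<dots> = 2 * (4*x*M^2) / (3 * x^2 * (M^2 / 4) * M)"
    using pos M by (simp add: field_simps power2_eq_square)
  also have "\<dots> \<le> 2 * K / (3 * x^2 * (y * z) * M)"
    using K pos M by (intro frac_le mult_right_mono) (auto intro: order_trans[OF _ K])
  also have "\<dots> = 4 * T * y * z * K / M"
    unfolding T_def rateSL_def using pos M by (simp add: field_simps power2_eq_square)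
  finally have "32 / (3 * P0) \<le> 4 * T * y * z * K / M" .
  then show ?thesis
    unfolding M_def[symmetric] lhs by (intro mult_right_mono le_imp_neg_le) auto
qed

lemma first_div_pair_sum_poly_le:
  fixes x m e :: real
  assumes "0 < m" "m \<le> x" "0 \<le> e" "e \<le> m^2 / 100"
  shows "-16*x^4*m - 20*x^3*m^2 + 4*x^3*e - 4*x^2*m^3 + 4*x^2*m*e + 48*x*m^2*e + 16*x*e^2
    + 144*m^3*e + 112*m*e^2 \<le> -16*x^4*m"
proof -
  have x: "0 < x" "m^2 \<le> x^2" "m^3 \<le> x^3" using assms by (auto intro: power_mono)
  have "x^2*m \<le> x^3" "x*m^2 \<le> x^3"
    using mult_left_mono[OF assms(2), of "x^2"] mult_left_mono[OF x(2), of x] x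
    by (simp_all add: power3_eq_cube power2_eq_square)
  have e2: "e^2 \<le> x^2 * (m^2 / 100)"
    using mult_mono[of e "x^2" e "m^2 / 100"] assms x by (simp add: power2_eq_square)
  have "x^3*e \<le> x^3*m^2/100"
    using mult_left_mono[OF assms(4), of "x^3"] x by simp
  moreover have "x^2*m*e \<le> x^3*m^2/100"
    using mult_mono[OF \<open>x^2*m \<le> x^3\<close> assms(4)] assms x by simp
  moreover have "x*m^2*e \<le> x^3*m^2/100"
    using mult_mono[OF \<open>x*m^2 \<le> x^3\<close> assms(4)] assms x by simp
  moreover have "m^3*e \<le> x^3*m^2/100"
    using mult_mono[OF x(3) assms(4)] assms x by simp
  moreover have "x*e^2 \<le> x^3*m^2/100"
    using mult_left_mono[OF e2, of x] x by (simp add: power3_eq_cube power2_eq_square)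
  moreover have "m*e^2 \<le> x^3*m^2/100"
    using mult_mono[OF assms(2) e2] assms by (simp add: power3_eq_cube power2_eq_square)
  moreover have "0 \<le> x^2*m^3" "0 \<le> x^3*m^2" using assms by auto
  ultimately show ?thesis by linarith
qed

lemma pair_sqdiff_div_first_sq_poly_le:
  fixes x m e :: real
  assumes "0 < x" "x \<le> m" "0 \<le> e"
  shows "8*x^4 + 8*x^3*m + 2*x^2*m^2 - 2*x^2*e - 16*x*m^3 - 16*x*m*e - 24*m^4 - 88*m^2*e - 16*e^2
    \<le> -22*m^4"
proof -
  have m: "x^2 \<le> m^2" "x^3 \<le> m^3" using assms by (auto intro: power_mono)
  have "x^4 \<le> x*m^3"
    using mult_left_mono[OF m(2), of x] assms by (simp add: eval_nat_numeral)
  moreover have "x^3*m \<le> x*m^3"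
    using mult_left_mono[OF mult_right_mono[OF m(1), of m], of x] assms
    by (simp add: eval_nat_numeral ac_simps)
  moreover have "x^2*m^2 \<le> x*m^3"
    using mult_left_mono[OF mult_right_mono[OF assms(2), of "m^2"], of x] assms
    by (simp add: eval_nat_numeral ac_simps)
  moreover have "x*m^3 \<le> m^4"
    using mult_right_mono[OF assms(2), of "m^3"] assms by (simp add: eval_nat_numeral)
  moreover have "0 \<le> x^2*e" "0 \<le> x*m*e" "0 \<le> m^2*e" "0 \<le> e^2" using assms by auto
  ultimately show ?thesis by linarith
qed

lemma pair_sum_squared_poly_ge:
  fixes x m e :: real
  assumes "0 < x" "x \<le> m" "0 \<le> e" "e \<le> x^2 / 1000"
  shows "x^2*m^3 \<le> 6*x^4*m + 8*x^3*m^2 - 4*x^3*e + 2*x^2*m^3 - 2*x^2*m*e - 32*x*m^2*e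
    - 16*x*e^2 - 72*m^3*e - 88*m*e^2"
proof -
  have m: "x^2 \<le> m^2" "x^3 \<le> m^3" using assms by (auto intro: power_mono)
  have "x^2*m \<le> m^3" "x*m^2 \<le> m^3"
    using mult_right_mono[OF m(1), of m] mult_right_mono[OF assms(2), of "m^2"] assms
    by (simp_all add: eval_nat_numeral)
  have e2: "e^2 \<le> m^2 * (x^2 / 1000)"
    using mult_mono[of e "m^2" e "x^2 / 1000"] assms m by (simp add: power2_eq_square)
  have "x^3*e \<le> x^2*m^3/1000"
    using mult_mono[OF m(2) assms(4)] assms by (simp add: ac_simps)
  moreover have "x^2*m*e \<le> x^2*m^3/1000"
    using mult_mono[OF \<open>x^2*m \<le> m^3\<close> assms(4)] assms by (simp add: ac_simps)
  moreover have "x*m^2*e \<le> x^2*m^3/1000"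
    using mult_mono[OF \<open>x*m^2 \<le> m^3\<close> assms(4)] assms by (simp add: ac_simps)
  moreover have "m^3*e \<le> x^2*m^3/1000"
    using mult_left_mono[OF assms(4), of "m^3"] assms by (simp add: ac_simps)
  moreover have "x*e^2 \<le> x^2*m^3/1000"
    using mult_mono[OF assms(2) e2] assms by (simp add: eval_nat_numeral ac_simps)
  moreover have "m*e^2 \<le> x^2*m^3/1000"
    using mult_left_mono[OF e2, of m] assms by (simp add: eval_nat_numeral ac_simps)
  moreover have "0 \<le> x^4*m" "0 \<le> x^3*m^2" "0 \<le> x^2*m^3" using assms by auto
  ultimately show ?thesis by linarith
qed
lemma first_div_pair_sum_derivative_le:
  assumes pos: "x > 0" "y > 0" "z > 0" and P: "x * (y + z) \<le> P0"
    and r: "(y - z)^2 \<le> (y + z)^2 / 100" and s: "y + z \<le> 2 * x"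
  defines "dx \<equiv> reduced_dx x y z" and "dy \<equiv> reduced_dy x y z" and "dz \<equiv> reduced_dy x z y"
  shows "(dx * (y + z) - x * (dy + dz)) / (y + z)^2 \<le> - 4 / (3 * P0)"
proof -
  define m where "m = (y + z) / 2"
  define e where "e = ((y - z) / 2)^2"
  define T where "T = rateSL x y z"
  define N where "N = -16*x^4*m - 20*x^3*m^2 + 4*x^3*e - 4*x^2*m^3 + 4*x^2*m*e + 48*x*m^2*e
    + 16*x*e^2 + 144*m^3*e + 112*m*e^2"
  have m: "m > 0" "y + z = 2 * m" "m \<le> x" using pos s unfolding m_def by auto
  have e: "0 \<le> e" "e \<le> m^2 / 100"
    using r unfolding e_def m_def by (auto simp: power_divide)
  have T: "1 / (6 * x^2 * m^4) \<le> T" unfolding T_def m_def by (rule rateSL_ge_mean[OF pos])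
  have "dx * (y + z) - x * (dy + dz) = T * x * ((y * qSL y (-x) z + z * qSL z (-x) y) - 2 * m * qSL (-x) y z)"
    unfolding dx_def dy_def dz_def reduced_dx_def reduced_dy_def T_def m(2)
    by (simp add: rateSL_swap algebra_simps)
  also have "\<dots> = T * x * N"
    unfolding qSL_first_mean_sqdiff[OF m_def e_def] qSL_pair_weighted_sum_mean_sqdiff[OF m_def e_def] N_def
    by algebra
  finally have num: "dx * (y + z) - x * (dy + dz) = T * x * N" .
  have N: "N \<le> -16*x^4*m" unfolding N_def by (rule first_div_pair_sum_poly_le[OF m(1,3) e])
  have "(dx * (y + z) - x * (dy + dz)) / (y + z)^2 = T * x * N / (4 * m^2)"
    unfolding num by (simp add: m(2) power2_eq_square)
  also have "\<dots> \<le> T * x * (-16*x^4*m) / (4 * m^2)"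
    using N rateSL_pos[OF pos] pos m unfolding T_def by (intro divide_right_mono mult_left_mono) auto
  also have "\<dots> = - (4 * x^5 / m) * T" using m by (simp add: field_simps eval_nat_numeral)
  also have "\<dots> \<le> - (4 * x^5 / m) * (1 / (6 * x^2 * m^4))"
    using T m pos by (intro mult_left_mono_neg) auto
  also have "\<dots> = - (2/3) * (x^3 / m^5)" using m pos by (simp add: field_simps eval_nat_numeral)
  also have "\<dots> \<le> - (2/3) * (m^3 / m^5)"
    using m by (intro mult_left_mono_neg divide_right_mono power_mono) auto
  also have "\<dots> = - (2/3) * (1 / m^2)" using m by (simp add: field_simps eval_nat_numeral)
  also have "\<dots> \<le> - (2/3) * (2 / P0)"
  proof -
    have "m * m \<le> x * m" using m by (intro mult_right_mono) auto
    moreover have "x * (y + z) = 2 * (x * m)" using m(2) by simp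
    ultimately have "2 * m^2 \<le> P0" using P unfolding power2_eq_square by linarith
    moreover have "0 < 2 * m^2" using m by simp
    ultimately have "2 / P0 \<le> 2 / (2 * m^2)" by (intro divide_left_mono mult_pos_pos) linarith+
    then have "2 / P0 \<le> 1 / m^2" by simp
    then show ?thesis by simp
  qed
  finally show ?thesis by simp
qed

lemma pair_sqdiff_div_first_sq_derivative_le:
  assumes pos: "x > 0" "y > 0" "z > 0" and P: "x * (y + z) \<le> P0" and s: "2 * x \<le> y + z"
  defines "dx \<equiv> reduced_dx x y z" and "dy \<equiv> reduced_dy x y z" and "dz \<equiv> reduced_dy x z y"
  shows "2 * (y - z) * ((dy - dz) * x - (y - z) * dx) / x^3 \<le> - (44 / (3 * P0)) * ((y - z)^2 / x^2)"
proof -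
  define m where "m = (y + z) / 2"
  define e where "e = ((y - z) / 2)^2"
  define T where "T = rateSL x y z"
  define A where "A = 8*x^4 + 8*x^3*m + 2*x^2*m^2 - 2*x^2*e - 16*x*m^3 - 16*x*m*e - 24*m^4
    - 88*m^2*e - 16*e^2"
  have m: "m > 0" "y + z = 2 * m" "x \<le> m" using pos s unfolding m_def by auto
  have e: "0 \<le> e" unfolding e_def by simp
  have T: "1 / (6 * x^2 * m^4) \<le> T" unfolding T_def m_def by (rule rateSL_ge_mean[OF pos])
  have diff: "dy - dz = - T * (y * qSL y (-x) z - z * qSL z (-x) y)"
    unfolding dy_def dz_def reduced_dy_def T_def by (simp add: rateSL_swap algebra_simps)
  have "(dy - dz) * x - (y - z) * dx = T * x * (y - z) * (qSL (-x) y z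
      - (-3*x^4 - 2*x^3*m - x^2*m^2 + x^2*e + 16*x*m^3 + 8*x*m*e + 24*m^4 + 52*m^2*e + 4*e^2))"
    unfolding diff qSL_pair_weighted_diff_mean_sqdiff[OF m_def e_def] dx_def reduced_dx_def T_def
    by (simp add: algebra_simps)
  also have "\<dots> = T * x * (y - z) * A"
    unfolding qSL_first_mean_sqdiff[OF m_def e_def] A_def by algebra
  finally have num: "(dy - dz) * x - (y - z) * dx = T * x * (y - z) * A" .
  have lhs: "2 * (y - z) * ((dy - dz) * x - (y - z) * dx) / x^3 = (2 * T * A) * ((y - z)^2 / x^2)"
    unfolding num using pos by (simp add: field_simps eval_nat_numeral)
  have A: "A \<le> -22 * m^4" unfolding A_def by (rule pair_sqdiff_div_first_sq_poly_le[OF pos(1) m(3) e])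
  have "2 * T * A \<le> 2 * T * (-22 * m^4)"
    using A rateSL_pos[OF pos] unfolding T_def by (intro mult_left_mono) auto
  also have "\<dots> = - (44 * m^4) * T" by simp
  also have "\<dots> \<le> - (44 * m^4) * (1 / (6 * x^2 * m^4))" using T m by (intro mult_left_mono_neg) auto
  also have "\<dots> = - (22/3) * (1 / x^2)" using m pos by (simp add: field_simps)
  also have "\<dots> \<le> - (22/3) * (2 / P0)"
  proof -
    have "x * x \<le> x * m" using m pos by (intro mult_left_mono) auto
    moreover have "x * (y + z) = 2 * (x * m)" using m(2) by simp
    ultimately have "2 * x^2 \<le> P0" using P unfolding power2_eq_square by linarith
    moreover have "0 < 2 * x^2" using pos by simp
    ultimately have "2 / P0 \<le> 2 / (2 * x^2)" by (intro divide_left_mono mult_pos_pos) linarith+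
    then have "2 / P0 \<le> 1 / x^2" by simp
    then show ?thesis by simp
  qed
  finally have "2 * T * A \<le> - (44 / (3 * P0))" by simp
  then show ?thesis unfolding lhs by (intro mult_right_mono) auto
qed

lemma pair_sum_squared_derivative_ge:
  assumes pos: "x > 0" "y > 0" "z > 0" and s: "2 * x \<le> y + z" and u: "250 * (y - z)^2 \<le> x^2"
  defines "dy \<equiv> reduced_dy x y z" and "dz \<equiv> reduced_dy x z y"
  shows "2 / 3 \<le> 2 * (y + z) * (dy + dz)"
proof -
  define m where "m = (y + z) / 2"
  define e where "e = ((y - z) / 2)^2"
  define T where "T = rateSL x y z"
  define S where "S = 6*x^4*m + 8*x^3*m^2 - 4*x^3*e + 2*x^2*m^3 - 2*x^2*m*e - 32*x*m^2*e
    - 16*x*e^2 - 72*m^3*e - 88*m*e^2"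
  have m: "m > 0" "y + z = 2 * m" "x \<le> m" using pos s unfolding m_def by auto
  have e: "0 \<le> e" "e \<le> x^2 / 1000" using u unfolding e_def by (auto simp: power_divide)
  have T: "1 / (6 * x^2 * m^4) \<le> T" unfolding T_def m_def by (rule rateSL_ge_mean[OF pos])
  have "dy + dz = - T * (y * qSL y (-x) z + z * qSL z (-x) y)"
    unfolding dy_def dz_def reduced_dy_def T_def by (simp add: rateSL_swap algebra_simps)
  then have sum: "dy + dz = T * S"
    unfolding qSL_pair_weighted_sum_mean_sqdiff[OF m_def e_def] S_def by (simp add: algebra_simps)
  have S: "x^2 * m^3 \<le> S" unfolding S_def by (rule pair_sum_squared_poly_ge[OF pos(1) m(3) e])
  have "2 / 3 = 4 * x^2 * m^4 * (1 / (6 * x^2 * m^4))" using pos m by (simp add: field_simps)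
  also have "\<dots> \<le> 4 * x^2 * m^4 * T" using T by (intro mult_left_mono) auto
  also have "\<dots> = 4 * m * T * (x^2 * m^3)" by (simp add: algebra_simps eval_nat_numeral)
  also have "\<dots> \<le> 4 * m * T * S"
    using S rateSL_pos[OF pos] m unfolding T_def by (intro mult_left_mono) auto
  also have "\<dots> = 2 * (y + z) * (dy + dz)" unfolding sum m(2) by simp
  finally show ?thesis .
qed

lemma balanced_pair_bounds:
  fixes y z :: real
  assumes "y > 0" "z > 0" and r: "(y - z)^2 \<le> (y + z)^2 / 100"
  shows "9/20 * (y + z) \<le> z" "(y + z)^2 / 5 \<le> y * z"
proof -
  have "(y - z)^2 \<le> ((y + z) / 10)^2" using r by (simp add: power_divide)
  then have "\<bar>y - z\<bar> \<le> (y + z) / 10" using assms by (subst (asm) power2_le_iff_abs_le) auto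
  then have y: "9/20 * (y + z) \<le> y" and z: "9/20 * (y + z) \<le> z"
    by (auto simp: abs_if split: if_splits)
  then show "9/20 * (y + z) \<le> z" by simp
  have "81/400 * (y + z)^2 \<le> y * z"
    using mult_mono[OF y z] assms by (simp add: power2_eq_square algebra_simps)
  moreover have "(y + z)^2 / 5 \<le> 81/400 * (y + z)^2" by simp
  ultimately show "(y + z)^2 / 5 \<le> y * z" by linarith
qed

lemma Ric11_div_first_bound:
  fixes x y z :: real
  assumes pos: "x > 0" "y > 0" "z > 0"
    and r: "(y - z)^2 \<le> (y + z)^2 / 100" and u: "(y - z)^2 \<le> x^2"
  shows "\<bar>Ric11 x y z / x\<bar> \<le> 5 * x / (y + z)^2"
proof -
  have yz: "(y + z)^2 / 5 \<le> y * z" by (rule balanced_pair_bounds[OF pos(2,3) r])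
  have "\<bar>Ric11 x y z / x\<bar> = \<bar>x^2 - (y - z)^2\<bar> / (2 * y * z * x)"
    unfolding Ric11_def using pos by (simp add: abs_divide abs_mult)
  also have "\<dots> \<le> (2 * x^2) / (2 * y * z * x)"
    using pos u by (intro divide_right_mono) (auto simp: abs_le_iff)
  also have "\<dots> = x / (y * z)" using pos by (simp add: power2_eq_square)
  also have "\<dots> \<le> x / ((y + z)^2 / 5)" using yz pos by (intro divide_left_mono) auto
  finally show ?thesis by (simp add: mult.commute)
qed

lemma Ric22_plus_one_bound:
  fixes x y z :: real
  assumes pos: "x > 0" "y > 0" "z > 0" and r: "(y - z)^2 \<le> (y + z)^2 / 100"
  shows "\<bar>Ric22 x y z + 1\<bar> \<le> 2 * sqrt ((y - z)^2 / x^2) + 2 * (x / (y + z))"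
proof -
  define M where "M = y + z"
  have M: "M > 0" "9/20 * M \<le> z" using balanced_pair_bounds[OF pos(2,3) r] pos unfolding M_def by auto
  have "Ric22 x y z + 1 = ((y - z) / x) * (M / (2 * z)) - x / (2 * z)"
    unfolding Ric22_def M_def using pos by (simp add: field_simps power2_eq_square)
  then have "\<bar>Ric22 x y z + 1\<bar> \<le> \<bar>((y - z) / x) * (M / (2 * z))\<bar> + \<bar>x / (2 * z)\<bar>"
    by (simp only: abs_triangle_ineq4)
  also have "\<dots> = (\<bar>y - z\<bar> / x) * (M / (2 * z)) + x / (2 * z)"
    using pos M by (simp add: abs_mult abs_divide)
  also have "\<dots> \<le> (\<bar>y - z\<bar> / x) * 2 + 2 * (x / M)"
  proof (rule add_mono)
    have "M / (2 * z) \<le> 2" using M by (simp add: field_simps)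
    then show "(\<bar>y - z\<bar> / x) * (M / (2 * z)) \<le> (\<bar>y - z\<bar> / x) * 2"
      using pos by (intro mult_left_mono) auto
    show "x / (2 * z) \<le> 2 * (x / M)" using M pos by (simp add: field_simps)
  qed
  also have "\<bar>y - z\<bar> / x = sqrt ((y - z)^2 / x^2)" using pos by (simp add: real_sqrt_divide)
  finally show ?thesis unfolding M_def by (simp add: mult.commute)
qed

lemma scalS_bound:
  fixes x y z :: real
  assumes pos: "x > 0" "y > 0" "z > 0"
    and r: "(y - z)^2 \<le> (y + z)^2 / 100" and u: "(y - z)^2 \<le> x^2"
  shows "\<bar>scalS x y z\<bar> \<le> 5 * x / (y + z)^2 + 5 / (y + z)"
proof -
  define M where "M = y + z"
  have M: "M > 0" "M^2 / 5 \<le> y * z" using balanced_pair_bounds[OF pos(2,3) r] pos unfolding M_def by auto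
  have "x^2 + y^2 + z^2 + 2 * (x * y + x * z - y * z) = x^2 + (y - z)^2 + 2 * x * M"
    unfolding M_def by (simp add: power2_eq_square algebra_simps)
  then have "scalS x y z = - ((x^2 + (y - z)^2 + 2 * x * M) / (2 * x * y * z))"
    unfolding scalS_def by (simp add: minus_divide_left)
  then have "\<bar>scalS x y z\<bar> = (x^2 + (y - z)^2 + 2 * x * M) / (2 * x * y * z)"
    using pos M by simp
  also have "\<dots> \<le> (2 * x^2 + 2 * x * M) / (2 * x * y * z)" using pos u by (intro divide_right_mono) auto
  also have "\<dots> = (x + M) / (y * z)" using pos by (simp add: field_simps power2_eq_square)
  also have "\<dots> \<le> (x + M) / (M^2 / 5)" using M pos by (intro divide_left_mono) auto
  also have "\<dots> = 5 * x / M^2 + 5 / M" using M by (simp add: field_simps power2_eq_square)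
  finally show ?thesis unfolding M_def .
qed

lemma Ric33_eq_Ric22_swap: "Ric33 x y z = Ric22 x z y"
  unfolding Ric33_def Ric22_def by (simp add: algebra_simps)

section \<open>Asymptotics of the reduced flow\<close>

context reduced_SL_flow
begin

lemma swap: "reduced_SL_flow x z y"
  using pos deriv_x deriv_y deriv_z by unfold_locales (auto simp: reduced_dx_swap)

definition P0 :: real where "P0 = x 0 * (y 0 + z 0)"

lemma P0_pos: "P0 > 0"
  using pos[of 0] unfolding P0_def by simp

lemma eventually_pos: "\<forall>\<^sub>F t in at_top. x t > 0 \<and> y t > 0 \<and> z t > 0"
  using eventually_ge_at_top[of 0] by eventually_elim (rule pos)

lemma first_mult_pair_sum_le_P0:
  assumes "t \<ge> 0"
  shows "x t * (y t + z t) \<le> P0"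
  unfolding P0_def
proof (rule nonincreasing_if_derivative_nonpos[OF _ order_refl assms])
  show "((\<lambda>t. x t * (y t + z t)) has_real_derivative
      reduced_dx (x t) (y t) (z t) * (y t + z t)
      + x t * (reduced_dy (x t) (y t) (z t) + reduced_dy (x t) (z t) (y t))) (at t within {0..})"
    if "t \<ge> 0" for t
    using that by (auto intro!: derivative_eq_intros deriv_x deriv_y deriv_z)
  show "reduced_dx (x t) (y t) (z t) * (y t + z t)
      + x t * (reduced_dy (x t) (y t) (z t) + reduced_dy (x t) (z t) (y t)) \<le> 0"
    if "0 < t" for t
    using pos[of t] that by (intro first_mult_pair_sum_derivative_nonpos) auto
qed

lemma eventually_pair_balanced: "\<forall>\<^sub>F t in at_top. (y t - z t)^2 \<le> (y t + z t)^2 / 100"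
proof -
  let ?dy = "\<lambda>t. reduced_dy (x t) (y t) (z t)" and ?dz = "\<lambda>t. reduced_dy (x t) (z t) (y t)"
  have "((\<lambda>t. (y t - z t)^2 / (y t + z t)^2) \<longlongrightarrow> 0) at_top"
  proof (rule tendsto_0_if_derivative_le_neg_mult
      [where f' = "\<lambda>t. 4 * (y t - z t) * (?dy t * z t - ?dz t * y t) / (y t + z t)^3"])
    show "((\<lambda>t. (y t - z t)^2 / (y t + z t)^2) has_real_derivative
        4 * (y t - z t) * (?dy t * z t - ?dz t * y t) / (y t + z t)^3) (at t within {0..})"
      if "t \<ge> 0" for t
    proof -
      have "y t + z t > 0" using pos[OF that] by simp
      then show ?thesis
        using that by (auto intro!: derivative_eq_intros deriv_y deriv_z simp: field_simps; algebra)
    qed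
    show "\<forall>\<^sub>F t in at_top. 4 * (y t - z t) * (?dy t * z t - ?dz t * y t) / (y t + z t)^3
        \<le> - (32 / (3 * P0)) * ((y t - z t)^2 / (y t + z t)^2)"
      using eventually_ge_at_top[of 0]
    proof eventually_elim
      case (elim t)
      show ?case
        by (rule pair_sqdiff_ratio_derivative_le)
           (use pos[OF elim] first_mult_pair_sum_le_P0[OF elim] in auto)
    qed
  qed (use P0_pos in auto)
  then have "\<forall>\<^sub>F t in at_top. (y t - z t)^2 / (y t + z t)^2 < 1 / 100"
    by (rule order_tendstoD) simp
  with eventually_pos show ?thesis
    by eventually_elim (auto simp: field_simps)
qed

lemma eventually_first_le_half_pair_sum: "\<forall>\<^sub>F t in at_top. 2 * x t \<le> y t + z t"
proof -
  let ?dx = "\<lambda>t. reduced_dx (x t) (y t) (z t)"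
  let ?dy = "\<lambda>t. reduced_dy (x t) (y t) (z t)" and ?dz = "\<lambda>t. reduced_dy (x t) (z t) (y t)"
  have "\<forall>\<^sub>F t in at_top. x t / (y t + z t) \<le> 1 / 2"
  proof (rule eventually_le_if_derivative_le_neg_above
      [where f' = "\<lambda>t. (?dx t * (y t + z t) - x t * (?dy t + ?dz t)) / (y t + z t)^2"])
    show "((\<lambda>t. x t / (y t + z t)) has_real_derivative
        (?dx t * (y t + z t) - x t * (?dy t + ?dz t)) / (y t + z t)^2) (at t within {0..})"
      if "t \<ge> 0" for t
    proof -
      have "y t + z t > 0" using pos[OF that] by simp
      then show ?thesis
        using that
        by (auto intro!: derivative_eq_intros deriv_x deriv_y deriv_z simp: field_simps power2_eq_square)
    qed
    show "\<forall>\<^sub>F t in at_top. 1 / 2 \<le> x t / (y t + z t) \<longrightarrow>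
        (?dx t * (y t + z t) - x t * (?dy t + ?dz t)) / (y t + z t)^2 \<le> - (4 / (3 * P0))"
      using eventually_ge_at_top[of 0] eventually_pair_balanced
    proof eventually_elim
      case (elim t)
      have "y t + z t \<le> 2 * x t" if "1 / 2 \<le> x t / (y t + z t)"
        using that pos[OF elim(1)] by (simp add: field_simps)
      then show ?case
        using first_div_pair_sum_derivative_le[OF _ _ _ first_mult_pair_sum_le_P0[OF elim(1)] elim(2)]
          pos[OF elim(1)]
        by auto
    qed
  qed (use P0_pos in auto)
  with eventually_pos show ?thesis
    by eventually_elim (auto simp: field_simps)
qed

lemma pair_sqdiff_div_first_sq_tendsto_0: "((\<lambda>t. (y t - z t)^2 / (x t)^2) \<longlongrightarrow> 0) at_top"
proof -
  let ?dx = "\<lambda>t. reduced_dx (x t) (y t) (z t)"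
  let ?dy = "\<lambda>t. reduced_dy (x t) (y t) (z t)" and ?dz = "\<lambda>t. reduced_dy (x t) (z t) (y t)"
  show ?thesis
  proof (rule tendsto_0_if_derivative_le_neg_mult
      [where f' = "\<lambda>t. 2 * (y t - z t) * ((?dy t - ?dz t) * x t - (y t - z t) * ?dx t) / (x t)^3"])
    show "((\<lambda>t. (y t - z t)^2 / (x t)^2) has_real_derivative
        2 * (y t - z t) * ((?dy t - ?dz t) * x t - (y t - z t) * ?dx t) / (x t)^3) (at t within {0..})"
      if "t \<ge> 0" for t
      using that pos[OF that]
      by (auto intro!: derivative_eq_intros deriv_x deriv_y deriv_z simp: field_simps eval_nat_numeral)
    show "\<forall>\<^sub>F t in at_top. 2 * (y t - z t) * ((?dy t - ?dz t) * x t - (y t - z t) * ?dx t) / (x t)^3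
        \<le> - (44 / (3 * P0)) * ((y t - z t)^2 / (x t)^2)"
      using eventually_ge_at_top[of 0] eventually_first_le_half_pair_sum
    proof eventually_elim
      case (elim t)
      show ?case
        by (rule pair_sqdiff_div_first_sq_derivative_le)
           (use pos[OF elim(1)] first_mult_pair_sum_le_P0 elim in auto)
    qed
  qed (use P0_pos in auto)
qed

lemma pair_sum_at_top: "filterlim (\<lambda>t. y t + z t) at_top at_top"
proof -
  let ?dy = "\<lambda>t. reduced_dy (x t) (y t) (z t)" and ?dz = "\<lambda>t. reduced_dy (x t) (z t) (y t)"
  have "\<forall>\<^sub>F t in at_top. (y t - z t)^2 / (x t)^2 < 1 / 250"
    using pair_sqdiff_div_first_sq_tendsto_0 by (rule order_tendstoD) simp
  then have "\<forall>\<^sub>F t in at_top. 250 * (y t - z t)^2 \<le> (x t)^2"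
    using eventually_pos by eventually_elim (auto simp: field_simps)
  then have "\<forall>\<^sub>F t in at_top. 2 / 3 \<le> 2 * (y t + z t) * (?dy t + ?dz t)"
    using eventually_pos eventually_first_le_half_pair_sum
    by eventually_elim (intro pair_sum_squared_derivative_ge; simp)
  then have square: "filterlim (\<lambda>t. (y t + z t)^2) at_top at_top"
    by (intro filterlim_at_top_if_derivative_ge[where f' = "\<lambda>t. 2 * (y t + z t) * (?dy t + ?dz t)"
          and c = "2 / 3"])
       (auto intro!: derivative_eq_intros deriv_y deriv_z)
  show ?thesis
    unfolding filterlim_at_top
  proof
    fix K :: real
    have "\<forall>\<^sub>F t in at_top. K^2 \<le> (y t + z t)^2"
      using square by (simp add: filterlim_at_top)
    with eventually_pos show "\<forall>\<^sub>F t in at_top. K \<le> y t + z t"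
      by eventually_elim (auto simp: power2_le_iff_abs_le)
  qed
qed

lemma eventually_asymptotic_regime:
  "\<forall>\<^sub>F t in at_top. x t > 0 \<and> y t > 0 \<and> z t > 0
    \<and> (y t - z t)^2 \<le> (y t + z t)^2 / 100 \<and> (y t - z t)^2 \<le> (x t)^2"
proof -
  have "\<forall>\<^sub>F t in at_top. (y t - z t)^2 / (x t)^2 < 1"
    using pair_sqdiff_div_first_sq_tendsto_0 by (rule order_tendstoD) simp
  then show ?thesis
    using eventually_pos eventually_pair_balanced by eventually_elim (auto simp: field_simps)
qed

lemma inverse_pair_sum_tendsto_0: "((\<lambda>t. inverse (y t + z t)) \<longlongrightarrow> 0) at_top"
  by (rule tendsto_inverse_0_at_top[OF pair_sum_at_top])

lemma first_div_pair_sum_tendsto_0: "((\<lambda>t. x t / (y t + z t)) \<longlongrightarrow> 0) at_top"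
proof (rule Lim_null_comparison)
  show "\<forall>\<^sub>F t in at_top.
      norm (x t / (y t + z t)) \<le> P0 * inverse (y t + z t) * inverse (y t + z t)"
    using eventually_ge_at_top[of 0]
  proof eventually_elim
    case (elim t)
    have "x t / M = x t * M * inverse M * inverse M" if "M > 0" for M
      using that by (simp add: field_simps)
    then have "x t / (y t + z t) = x t * (y t + z t) * inverse (y t + z t) * inverse (y t + z t)"
      using pos[OF elim] by simp
    also have "\<dots> \<le> P0 * inverse (y t + z t) * inverse (y t + z t)"
      using first_mult_pair_sum_le_P0[OF elim] pos[OF elim] by (intro mult_right_mono) auto
    finally show ?case using pos[OF elim] by simp
  qed
  show "((\<lambda>t. P0 * inverse (y t + z t) * inverse (y t + z t)) \<longlongrightarrow> 0) at_top"
    using tendsto_mult[OF tendsto_mult_right_zero[OF inverse_pair_sum_tendsto_0]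
        inverse_pair_sum_tendsto_0] by simp
qed

lemma first_div_pair_sum_squared_tendsto_0: "((\<lambda>t. x t / (y t + z t)^2) \<longlongrightarrow> 0) at_top"
  using tendsto_mult[OF first_div_pair_sum_tendsto_0 inverse_pair_sum_tendsto_0]
  by (simp add: power2_eq_square divide_inverse mult.assoc)

lemma Ric11_div_first_tendsto_0: "((\<lambda>t. Ric11 (x t) (y t) (z t) / x t) \<longlongrightarrow> 0) at_top"
proof (rule Lim_null_comparison)
  show "\<forall>\<^sub>F t in at_top. norm (Ric11 (x t) (y t) (z t) / x t) \<le> 5 * (x t / (y t + z t)^2)"
    using eventually_asymptotic_regime
  proof eventually_elim
    case (elim t)
    then have "\<bar>Ric11 (x t) (y t) (z t) / x t\<bar> \<le> 5 * x t / (y t + z t)^2"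
      by (intro Ric11_div_first_bound) auto
    then show ?case by simp
  qed
  show "((\<lambda>t. 5 * (x t / (y t + z t)^2)) \<longlongrightarrow> 0) at_top"
    using tendsto_mult_right_zero[OF first_div_pair_sum_squared_tendsto_0] .
qed

lemma Ric22_tendsto_minus_1: "((\<lambda>t. Ric22 (x t) (y t) (z t)) \<longlongrightarrow> -1) at_top"
proof -
  have "((\<lambda>t. Ric22 (x t) (y t) (z t) + 1) \<longlongrightarrow> 0) at_top"
  proof (rule Lim_null_comparison)
    show "\<forall>\<^sub>F t in at_top. norm (Ric22 (x t) (y t) (z t) + 1)
        \<le> 2 * sqrt ((y t - z t)^2 / (x t)^2) + 2 * (x t / (y t + z t))"
      using eventually_asymptotic_regime
    proof eventually_elim
      case (elim t)
      then show ?case by (simp only: real_norm_def) (intro Ric22_plus_one_bound; simp)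
    qed
    show "((\<lambda>t. 2 * sqrt ((y t - z t)^2 / (x t)^2) + 2 * (x t / (y t + z t))) \<longlongrightarrow> 0) at_top"
      using tendsto_add[OF tendsto_mult_right_zero[OF tendsto_real_sqrt
          [OF pair_sqdiff_div_first_sq_tendsto_0, unfolded real_sqrt_zero]]
          tendsto_mult_right_zero[OF first_div_pair_sum_tendsto_0]]
      by simp
  qed
  from tendsto_add[OF this tendsto_const[of "-1"]] show ?thesis by simp
qed

lemma scalS_tendsto_0: "((\<lambda>t. scalS (x t) (y t) (z t)) \<longlongrightarrow> 0) at_top"
proof (rule Lim_null_comparison)
  show "\<forall>\<^sub>F t in at_top. norm (scalS (x t) (y t) (z t))
      \<le> 5 * (x t / (y t + z t)^2) + 5 * inverse (y t + z t)"
    using eventually_asymptotic_regime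
  proof eventually_elim
    case (elim t)
    then have "\<bar>scalS (x t) (y t) (z t)\<bar> \<le> 5 * x t / (y t + z t)^2 + 5 / (y t + z t)"
      by (intro scalS_bound) auto
    then show ?case by (simp add: divide_inverse)
  qed
  show "((\<lambda>t. 5 * (x t / (y t + z t)^2) + 5 * inverse (y t + z t)) \<longlongrightarrow> 0) at_top"
    using tendsto_add[OF tendsto_mult_right_zero[OF first_div_pair_sum_squared_tendsto_0]
        tendsto_mult_right_zero[OF inverse_pair_sum_tendsto_0]] by simp
qed

end

theorem proposition5p14:
  fixes g00 g11 g22 g33 :: "real \<Rightarrow> real" and h00 h11 h22 h33 :: real
  assumes "h00 > 0" "h11 > 0" "h22 > 0" "h33 > 0"
    and "solves_SL g00 g11 g22 g33 h00 h11 h22 h33"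
  shows "((\<lambda>t. Ric11 (g11 t) (g22 t) (g33 t) / g11 t) \<longlongrightarrow> 0) at_top \<and>
         ((\<lambda>t. Ric22 (g11 t) (g22 t) (g33 t)) \<longlongrightarrow> -1) at_top \<and>
         ((\<lambda>t. Ric33 (g11 t) (g22 t) (g33 t)) \<longlongrightarrow> -1) at_top \<and>
         ((\<lambda>t. scalS (g11 t) (g22 t) (g33 t)) \<longlongrightarrow> 0) at_top"
proof -
  interpret reduced_SL_flow g11 g22 g33
    using solves_SL_reduced_SL_flow[OF assms] .
  interpret swapped: reduced_SL_flow g11 g33 g22
    by (rule swap)
  show ?thesis
    using Ric11_div_first_tendsto_0 Ric22_tendsto_minus_1 swapped.Ric22_tendsto_minus_1 scalS_tendsto_0
    unfolding Ric33_eq_Ric22_swap by blast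
qed

end
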